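(* Over a field of characteristic $0$, write $[a,b]=ab-ba$ and $\{a,b\}=ab+ba$. An algebra is left-symmetric and satisfies $(ab)c-(ba)c-(ac)b+(ca)b+(bc)a-(cb)a=0$ if and only if, in terms of $[\cdot,\cdot]$ and $\{\cdot,\cdot\}$, it satisfies \[ [[a,b],c]+[[b,c],a]+[[c,a],b]=0, \] \[ \{\{a,b\},c\}=-\{[a,b],c\}-2\{[a,c],b\}+[\{a,b\},c]-[[a,c],b]+\{a,\{b,c\}\}-\{a,[b,c]\}+[a,\{b,c\}], \] and \[ \{[a,b],c\}+\{[b,c],a\}+\{[c,a],b\}=0. \]
   Context: A left-symmetric algebra is an algebra whose associator $(a,b,c)=(ab)c-a(bc)$ satisfies $(a,b,c)=(b,a,c)$. The statement is the polarization (Markl–Remm) of this variety. *)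

theory Defs
  imports Complex_Main
begin

definition is_algebra :: "('k::field \<Rightarrow> 'v::ab_group_add \<Rightarrow> 'v) \<Rightarrow> ('v \<Rightarrow> 'v \<Rightarrow> 'v) \<Rightarrow> bool" where
  "is_algebra scale m \<longleftrightarrow> vector_space scale
     \<and> (\<forall>x y z. m (x + y) z = m x z + m y z)
     \<and> (\<forall>x y z. m x (y + z) = m x y + m x z)
     \<and> (\<forall>c x y. m (scale c x) y = scale c (m x y))
     \<and> (\<forall>c x y. m x (scale c y) = scale c (m x y))"

definition assoc :: "('v \<Rightarrow> 'v \<Rightarrow> 'v) \<Rightarrow> 'v \<Rightarrow> 'v \<Rightarrow> 'v \<Rightarrow> 'v::ab_group_add" where
  "assoc m a b c = m (m a b) c - m a (m b c)"

definition left_symmetric :: "('v \<Rightarrow> 'v \<Rightarrow> 'v::ab_group_add) \<Rightarrow> bool" where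
  "left_symmetric m \<longleftrightarrow> (\<forall>a b c. assoc m a b c = assoc m b a c)"

definition comm :: "('v \<Rightarrow> 'v \<Rightarrow> 'v) \<Rightarrow> 'v \<Rightarrow> 'v \<Rightarrow> 'v::ab_group_add" where
  "comm m a b = m a b - m b a"

definition acomm :: "('v \<Rightarrow> 'v \<Rightarrow> 'v) \<Rightarrow> 'v \<Rightarrow> 'v \<Rightarrow> 'v::ab_group_add" where
  "acomm m a b = m a b + m b a"

end

theory Submission
  imports Defs
begin

(* The theorem is a linear change of variables between identities.  Writing D(a,b,c) for the
  left-symmetry defect (a,b,c) - (b,a,c), the three identities on the right are, modulo
  bilinearity,  J = D(a,b,c) - D(a,c,b) + D(b,c,a)  (the Jacobi identity),
  J + 4 D(a,c,b)  and  2 T - J,  where T(a,b,c) = [a,b]c + [b,c]a + [c,a]b is the second identity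
  on the left.  Dividing by 2 and 4 in characteristic 0 gives the converse. *)

definition ls_defect :: "('v \<Rightarrow> 'v \<Rightarrow> 'v) \<Rightarrow> 'v \<Rightarrow> 'v \<Rightarrow> 'v \<Rightarrow> 'v::ab_group_add" where
  "ls_defect m a b c = assoc m a b c - assoc m b a c"

definition comm_cyclic_sum :: "('v \<Rightarrow> 'v \<Rightarrow> 'v) \<Rightarrow> 'v \<Rightarrow> 'v \<Rightarrow> 'v \<Rightarrow> 'v::ab_group_add" where
  "comm_cyclic_sum m a b c = m (comm m a b) c + m (comm m b c) a + m (comm m c a) b"

definition jacobi_sum :: "('v \<Rightarrow> 'v \<Rightarrow> 'v) \<Rightarrow> 'v \<Rightarrow> 'v \<Rightarrow> 'v \<Rightarrow> 'v::ab_group_add" where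
  "jacobi_sum m a b c = comm m (comm m a b) c + comm m (comm m b c) a + comm m (comm m c a) b"

definition acomm_jacobi_sum :: "('v \<Rightarrow> 'v \<Rightarrow> 'v) \<Rightarrow> 'v \<Rightarrow> 'v \<Rightarrow> 'v \<Rightarrow> 'v::ab_group_add" where
  "acomm_jacobi_sum m a b c =
     acomm m (comm m a b) c + acomm m (comm m b c) a + acomm m (comm m c a) b"

definition acomm_acomm_defect ::
    "('k::field \<Rightarrow> 'v \<Rightarrow> 'v) \<Rightarrow> ('v \<Rightarrow> 'v \<Rightarrow> 'v) \<Rightarrow> 'v \<Rightarrow> 'v \<Rightarrow> 'v \<Rightarrow> 'v::ab_group_add" where
  "acomm_acomm_defect scale m a b c = acomm m (acomm m a b) c -
     (- acomm m (comm m a b) c - scale 2 (acomm m (comm m a c) b)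
      + comm m (acomm m a b) c - comm m (comm m a c) b
      + acomm m a (acomm m b c) - acomm m a (comm m b c)
      + comm m a (acomm m b c))"

lemma is_algebra_additive:
  assumes "is_algebra scale m"
  shows "additive (m x)" and "additive (\<lambda>y. m y z)"
  using assms by (auto simp: is_algebra_def additive_def)

lemma is_algebra_vector_space: "is_algebra scale m \<Longrightarrow> vector_space scale"
  by (simp add: is_algebra_def)

lemma is_algebra_mult_simps:
  assumes "is_algebra scale m"
  shows "m (x + y) z = m x z + m y z" "m z (x + y) = m z x + m z y"
    "m (x - y) z = m x z - m y z" "m z (x - y) = m z x - m z y"
    "m (- x) z = - m x z" "m z (- x) = - m z x"
  using additive.add[OF is_algebra_additive(2)[OF assms]]
    additive.add[OF is_algebra_additive(1)[OF assms]]
    additive.diff[OF is_algebra_additive(2)[OF assms]]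
    additive.diff[OF is_algebra_additive(1)[OF assms]]
    additive.minus[OF is_algebra_additive(2)[OF assms]]
    additive.minus[OF is_algebra_additive(1)[OF assms]]
  by auto

lemma (in vector_space) scale_two: "scale 2 x = x + x"
  using scale_left_distrib[of 1 1 x] by (simp add: one_add_one)

lemma (in vector_space) scale_four: "scale 4 x = (x + x) + (x + x)"
  using scale_left_distrib[of 2 2 x] by (simp add: scale_two)

lemma comm_cyclic_sum_expand:
  assumes "is_algebra scale m"
  shows "comm_cyclic_sum m a b c = m (m a b) c - m (m b a) c - m (m a c) b + m (m c a) b
                                   + m (m b c) a - m (m c b) a"
  by (simp add: comm_cyclic_sum_def comm_def is_algebra_mult_simps[OF assms] algebra_simps)

lemma jacobi_sum_eq_ls_defect:
  assumes "is_algebra scale m"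
  shows "jacobi_sum m a b c = ls_defect m a b c - ls_defect m a c b + ls_defect m b c a"
  by (simp add: jacobi_sum_def ls_defect_def assoc_def comm_def is_algebra_mult_simps[OF assms]
      algebra_simps)

lemma acomm_acomm_defect_eq_ls_defect:
  assumes "is_algebra scale m"
  shows "acomm_acomm_defect scale m a b c = jacobi_sum m a b c + scale 4 (ls_defect m a c b)"
  using vector_space.scale_two[OF is_algebra_vector_space[OF assms]]
    vector_space.scale_four[OF is_algebra_vector_space[OF assms]]
  by (simp add: acomm_acomm_defect_def jacobi_sum_eq_ls_defect[OF assms] ls_defect_def assoc_def
      comm_def acomm_def is_algebra_mult_simps[OF assms] algebra_simps)

lemma acomm_jacobi_sum_eq_comm_cyclic_sum:
  assumes "is_algebra scale m"
  shows "acomm_jacobi_sum m a b c = scale 2 (comm_cyclic_sum m a b c) - jacobi_sum m a b c"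
  using vector_space.scale_two[OF is_algebra_vector_space[OF assms]]
  by (simp add: acomm_jacobi_sum_def comm_cyclic_sum_def jacobi_sum_def
      comm_def acomm_def is_algebra_mult_simps[OF assms] algebra_simps)

lemma left_symmetric_iff_ls_defect:
  "left_symmetric m \<longleftrightarrow> (\<forall>a b c. ls_defect m a b c = 0)"
  by (simp add: left_symmetric_def ls_defect_def)

lemma ls_and_comm_cyclic_iff_jacobi_identities:
  fixes scale :: "'k::field_char_0 \<Rightarrow> 'v::ab_group_add \<Rightarrow> 'v"
  assumes alg: "is_algebra scale m"
  shows "(\<forall>a b c. ls_defect m a b c = 0) \<and> (\<forall>a b c. comm_cyclic_sum m a b c = 0)
     \<longleftrightarrow> (\<forall>a b c. jacobi_sum m a b c = 0 \<and> acomm_acomm_defect scale m a b c = 0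
                   \<and> acomm_jacobi_sum m a b c = 0)"
proof -
  interpret vector_space scale by (rule is_algebra_vector_space[OF alg])
  note identities = jacobi_sum_eq_ls_defect[OF alg] acomm_acomm_defect_eq_ls_defect[OF alg]
    acomm_jacobi_sum_eq_comm_cyclic_sum[OF alg]
  show ?thesis
  proof
    assume "(\<forall>a b c. ls_defect m a b c = 0) \<and> (\<forall>a b c. comm_cyclic_sum m a b c = 0)"
    then show "\<forall>a b c. jacobi_sum m a b c = 0 \<and> acomm_acomm_defect scale m a b c = 0
                 \<and> acomm_jacobi_sum m a b c = 0"
      by (simp add: identities)
  next
    assume J: "\<forall>a b c. jacobi_sum m a b c = 0 \<and> acomm_acomm_defect scale m a b c = 0
                 \<and> acomm_jacobi_sum m a b c = 0"
    have "scale 4 (ls_defect m a c b) = acomm_acomm_defect scale m a b c - jacobi_sum m a b c"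
      for a b c by (simp add: identities)
    then have "scale 4 (ls_defect m a c b) = 0" for a b c
      using J by simp
    then have D: "ls_defect m a b c = 0" for a b c
      by simp
    have "scale 2 (comm_cyclic_sum m a b c) = acomm_jacobi_sum m a b c + jacobi_sum m a b c"
      for a b c by (simp add: identities)
    then have "scale 2 (comm_cyclic_sum m a b c) = 0" for a b c
      using J by simp
    then have "comm_cyclic_sum m a b c = 0" for a b c
      by simp
    with D show "(\<forall>a b c. ls_defect m a b c = 0) \<and> (\<forall>a b c. comm_cyclic_sum m a b c = 0)"
      by blast
  qed
qed

theorem mainTheorem14:
  fixes scale :: "'k::field_char_0 \<Rightarrow> 'v::ab_group_add \<Rightarrow> 'v"
    and m :: "'v \<Rightarrow> 'v \<Rightarrow> 'v"
  assumes "is_algebra scale m"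
  shows "(left_symmetric m \<and>
          (\<forall>a b c. m (m a b) c - m (m b a) c - m (m a c) b + m (m c a) b
                     + m (m b c) a - m (m c b) a = 0))
     \<longleftrightarrow>
         (\<forall>a b c.
            comm m (comm m a b) c + comm m (comm m b c) a + comm m (comm m c a) b = 0
          \<and> acomm m (acomm m a b) c =
               - acomm m (comm m a b) c - scale 2 (acomm m (comm m a c) b)
               + comm m (acomm m a b) c - comm m (comm m a c) b
               + acomm m a (acomm m b c) - acomm m a (comm m b c)
               + comm m a (acomm m b c)
          \<and> acomm m (comm m a b) c + acomm m (comm m b c) a + acomm m (comm m c a) b = 0)"
  using ls_and_comm_cyclic_iff_jacobi_identities[OF assms]
  unfolding left_symmetric_iff_ls_defect comm_cyclic_sum_expand[OF assms] jacobi_sum_def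
    acomm_jacobi_sum_def acomm_acomm_defect_def right_minus_eq .

end
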